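(* Let $L^x,L^y>0$, let $i\neq j$ be two boxes, each box $k\in\{i,j\}$ having center $(c^x_k,c^y_k)$, side lengths $(\ell^x_k,\ell^y_k)$, area $\alpha_k>0$ and constants $lb^s_k,ub^s_k$. Let $$Q^{FLP}=\{(c_i,c_j,\ell_i,\ell_j)\in\mathbb{R}^8:\ \tfrac12\ell^s_k\le c^s_k\le L^s-\tfrac12\ell^s_k,\ lb^s_k\le\ell^s_k\le ub^s_k,\ \ell^x_k\ell^y_k\ge\alpha_k\ \ \forall s\in\{x,y\},k\in\{i,j\}\}.$$ Define three sets (with $(c,\ell)=(c_i,c_j,\ell_i,\ell_j)\in Q^{FLP}$ in each): (i) $E^8$: all $(c,\ell,z)$ with $z=(z^y_{i,j},z^x_{i,j},z^y_{j,i},z^x_{j,i})\in\{0,1\}^4$ not identically zero, $z^s_{i,j}+z^s_{j,i}\le 1$ for each $s$, $z^s_{p,q}=1\Rightarrow \mathscr{B}_p\leftarrow_s\mathscr{B}_q$, and $z^s_{i,j}=z^s_{j,i}=0\Rightarrow(\mathscr{B}_i\not\leftarrow_s\mathscr{B}_j$ and $\mathscr{B}_j\not\leftarrow_s\mathscr{B}_i)$; (ii) $E^U$: all $(c,\ell,u)$ with $u=(u^y_{i,j},u^x_{i,j},u^y_{j,i},u^x_{j,i})\in\{0,1\}^4$ a unit vector and $u^s_{p,q}=1\Rightarrow\mathscr{B}_p\leftarrow_s\mathscr{B}_q$; (iii) $E^{GB}$: all $(c,\ell,w)$ with $w\in\{0,1\}^2$ such that $w=(0,0)\Rightarrow\mathscr{B}_i\leftarrow_y\mathscr{B}_j$,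 $w=(1,0)\Rightarrow\mathscr{B}_i\leftarrow_x\mathscr{B}_j$, $w=(1,1)\Rightarrow\mathscr{B}_j\leftarrow_y\mathscr{B}_i$, $w=(0,1)\Rightarrow\mathscr{B}_j\leftarrow_x\mathscr{B}_i$. Suppose $a\in\mathbb{R}^4$ (coefficients of $c$), $b\in\mathbb{R}^4$ (coefficients of $\ell$), $\delta\in\mathbb{R}^4$ with $\delta\ge0$ and $f\in\mathbb{R}$ are such that $a^Tc+b^T\ell+\delta^Tz\le f$ holds for all $(c,\ell,z)\in E^8$. Then $a^Tc+b^T\ell+\delta^Tu\le f$ holds for all $(c,\ell,u)\in E^U$, and $a^Tc+b^T\ell+\delta^T\mathscr{A}^{GB}(w)\le f$ holds for all $(c,\ell,w)\in E^{GB}$, where $\mathscr{A}^{GB}(w)=(-w_1-w_2+1,\ w_1-w_2,\ w_1+w_2-1,\ -w_1+w_2)$ (taking the place of $(z^y_{i,j},z^x_{i,j},z^y_{j,i},z^x_{j,i})$).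
   Context: $\mathscr{B}_p\leftarrow_s\mathscr{B}_q$ means $c^s_p+\tfrac12\ell^s_p\le c^s_q-\tfrac12\ell^s_q$ and $\mathscr{B}_p\not\leftarrow_s\mathscr{B}_q$ means $c^s_p+\tfrac12\ell^s_p\ge c^s_q-\tfrac12\ell^s_q$. The sets $E^8,E^U,E^{GB}$ are the embeddings $\operatorname{Em}(Q^{FLP},D^8,C^8)$, $\operatorname{Em}(Q^{FLP},D^4,U^4)$, $\operatorname{Em}(Q^{FLP},D^4,GB^4)$ (refined eight-branch, unary four-branch, and Gray two-bit encodings of the non-overlap condition). In the paper $ub^s_k=\min\{\sqrt{\alpha_k\beta_k},L^s\}$ and $lb^s_k=\beta_k/ub^s_k$ for an aspect ratio $\beta_k>0$. *)

theory Defs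
  imports Main "HOL.Real"
begin

datatype box = Bi | Bj
datatype axis = X | Y

fun other :: "box \<Rightarrow> box" where
  "other Bi = Bj" | "other Bj = Bi"

text \<open>A vector z of the branch variables is indexed so that z p s = z^s_{p, other p},
  i.e. z Bi Y = z^y_{i,j}, z Bi X = z^x_{i,j}, z Bj Y = z^y_{j,i}, z Bj X = z^x_{j,i}.\<close>
type_synonym vec4 = "box \<Rightarrow> axis \<Rightarrow> real"

definition dot :: "vec4 \<Rightarrow> vec4 \<Rightarrow> real" where
  "dot f g = f Bi X * g Bi X + f Bi Y * g Bi Y + f Bj X * g Bj X + f Bj Y * g Bj Y"

definition left_of :: "vec4 \<Rightarrow> vec4 \<Rightarrow> axis \<Rightarrow> box \<Rightarrow> box \<Rightarrow> bool" where
  "left_of c l s p q \<longleftrightarrow> c p s + l p s / 2 \<le> c q s - l q s / 2"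

definition not_left_of :: "vec4 \<Rightarrow> vec4 \<Rightarrow> axis \<Rightarrow> box \<Rightarrow> box \<Rightarrow> bool" where
  "not_left_of c l s p q \<longleftrightarrow> c p s + l p s / 2 \<ge> c q s - l q s / 2"

definition in_QFLP ::
  "(axis \<Rightarrow> real) \<Rightarrow> vec4 \<Rightarrow> vec4 \<Rightarrow> (box \<Rightarrow> real) \<Rightarrow> vec4 \<Rightarrow> vec4 \<Rightarrow> bool" where
  "in_QFLP L lb ub \<alpha> c l \<longleftrightarrow>
     (\<forall>k s. l k s / 2 \<le> c k s \<and> c k s \<le> L s - l k s / 2 \<and> lb k s \<le> l k s \<and> l k s \<le> ub k s)
     \<and> (\<forall>k. l k X * l k Y \<ge> \<alpha> k)"

definition in_E8 ::
  "(axis \<Rightarrow> real) \<Rightarrow> vec4 \<Rightarrow> vec4 \<Rightarrow> (box \<Rightarrow> real) \<Rightarrow> vec4 \<Rightarrow> vec4 \<Rightarrow> vec4 \<Rightarrow> bool" where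
  "in_E8 L lb ub \<alpha> c l z \<longleftrightarrow>
     in_QFLP L lb ub \<alpha> c l
     \<and> (\<forall>p s. z p s \<in> {0, 1})
     \<and> (\<exists>p s. z p s \<noteq> 0)
     \<and> (\<forall>s. z Bi s + z Bj s \<le> 1)
     \<and> (\<forall>p s. z p s = 1 \<longrightarrow> left_of c l s p (other p))
     \<and> (\<forall>s. z Bi s = 0 \<and> z Bj s = 0 \<longrightarrow>
            not_left_of c l s Bi Bj \<and> not_left_of c l s Bj Bi)"

definition in_EU ::
  "(axis \<Rightarrow> real) \<Rightarrow> vec4 \<Rightarrow> vec4 \<Rightarrow> (box \<Rightarrow> real) \<Rightarrow> vec4 \<Rightarrow> vec4 \<Rightarrow> vec4 \<Rightarrow> bool" where
  "in_EU L lb ub \<alpha> c l u \<longleftrightarrow>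
     in_QFLP L lb ub \<alpha> c l
     \<and> (\<exists>p0 s0. u = (\<lambda>p s. if p = p0 \<and> s = s0 then 1 else 0))
     \<and> (\<forall>p s. u p s = 1 \<longrightarrow> left_of c l s p (other p))"

definition in_EGB ::
  "(axis \<Rightarrow> real) \<Rightarrow> vec4 \<Rightarrow> vec4 \<Rightarrow> (box \<Rightarrow> real) \<Rightarrow> vec4 \<Rightarrow> vec4 \<Rightarrow> real \<Rightarrow> real \<Rightarrow> bool" where
  "in_EGB L lb ub \<alpha> c l w1 w2 \<longleftrightarrow>
     in_QFLP L lb ub \<alpha> c l
     \<and> w1 \<in> {0, 1} \<and> w2 \<in> {0, 1}
     \<and> ((w1, w2) = (0, 0) \<longrightarrow> left_of c l Y Bi Bj)
     \<and> ((w1, w2) = (1, 0) \<longrightarrow> left_of c l X Bi Bj)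
     \<and> ((w1, w2) = (1, 1) \<longrightarrow> left_of c l Y Bj Bi)
     \<and> ((w1, w2) = (0, 1) \<longrightarrow> left_of c l X Bj Bi)"

fun AGB :: "real \<Rightarrow> real \<Rightarrow> vec4" where
  "AGB w1 w2 Bi Y = - w1 - w2 + 1"
| "AGB w1 w2 Bi X = w1 - w2"
| "AGB w1 w2 Bj Y = w1 + w2 - 1"
| "AGB w1 w2 Bj X = - w1 + w2"

end

theory Submission
  imports Defs
begin

text \<open>Every point of \<open>E^U\<close> or \<open>E^GB\<close> selects a branch: a box \<open>p\<close> and an axis \<open>s\<close> with
  \<open>B_p \<leftarrow>_s B_(other p)\<close>. Putting a 1 at \<open>(p, s)\<close> and filling in the other axis according to
  the actual relative position of the boxes gives a point of \<open>E^8\<close> with the same \<open>(c, l)\<close>,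
  whose \<open>\<delta>\<close>-term dominates \<open>\<delta> p s\<close> because \<open>\<delta> \<ge> 0\<close>. Hence a valid inequality for \<open>E^8\<close>
  bounds \<open>a\<^sup>Tc + b\<^sup>Tl + \<delta> p s\<close> by \<open>f\<close>, and the \<open>\<delta>\<close>-terms of the unary and Gray encodings are
  \<open>\<delta> p s\<close> and \<open>\<delta> p s - \<delta> (other p) s\<close>, respectively.\<close>

definition unit4 :: "box \<Rightarrow> axis \<Rightarrow> vec4" where
  "unit4 p0 s0 = (\<lambda>p s. if p = p0 \<and> s = s0 then 1 else 0)"

lemma dot_unit4 [simp]: "dot \<delta> (unit4 p s) = \<delta> p s"
  by (cases p; cases s) (simp_all add: dot_def unit4_def)

lemma not_left_of_if_not_left_of: "\<not> left_of c l s p q \<Longrightarrow> not_left_of c l s p q"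
  by (auto simp: left_of_def not_left_of_def)

lemma dot_ge_component:
  assumes "\<forall>p s. \<delta> p s \<ge> 0" and "\<forall>p s. z p s \<ge> 0"
  shows "\<delta> p0 s0 * z p0 s0 \<le> dot \<delta> z"
  using assms by (cases p0; cases s0) (simp_all add: dot_def add_nonneg_nonneg)

text \<open>If both \<open>B_i \<leftarrow>_s B_j\<close> and \<open>B_j \<leftarrow>_s B_i\<close> hold (possible only when \<open>l_i + l_j \<le> 0\<close>),
  box \<open>i\<close> is given priority, so that at most one indicator per axis is set.\<close>
definition order_indicator :: "vec4 \<Rightarrow> vec4 \<Rightarrow> vec4" where
  "order_indicator c l p s =
     (if left_of c l s p (other p) \<and> (p = Bi \<or> \<not> left_of c l s Bi Bj) then 1 else 0)"

definition separating_completion :: "vec4 \<Rightarrow> vec4 \<Rightarrow> box \<Rightarrow> axis \<Rightarrow> vec4" where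
  "separating_completion c l p0 s0 =
     (\<lambda>p s. if s = s0 then unit4 p0 s0 p s else order_indicator c l p s)"

lemma in_E8_separating_completion:
  assumes "in_QFLP L lb ub \<alpha> c l" and "left_of c l s0 p0 (other p0)"
  shows "in_E8 L lb ub \<alpha> c l (separating_completion c l p0 s0)"
  unfolding in_E8_def
proof (intro conjI allI impI)
  let ?z = "separating_completion c l p0 s0"
  note defs = separating_completion_def unit4_def order_indicator_def
  show "\<exists>p s. ?z p s \<noteq> 0"
    by (intro exI[of _ p0] exI[of _ s0]) (simp add: defs)
  show "left_of c l s p (other p)" if "?z p s = 1" for p s
    using that assms(2) by (cases p; cases p0) (auto simp: defs split: if_splits)
  show "not_left_of c l s Bi Bj" and "not_left_of c l s Bj Bi"
    if "?z Bi s = 0 \<and> ?z Bj s = 0" for s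
    using that by (cases p0; auto intro!: not_left_of_if_not_left_of simp: defs split: if_splits)+
qed (use assms(1) in \<open>auto simp: separating_completion_def unit4_def order_indicator_def\<close>)

lemma valid_E8_bounds_branch:
  assumes \<delta>_nonneg: "\<forall>p s. \<delta> p s \<ge> 0"
    and valid8: "\<forall>c l z. in_E8 L lb ub \<alpha> c l z \<longrightarrow> dot a c + dot b l + dot \<delta> z \<le> f"
    and "in_QFLP L lb ub \<alpha> c l" and "left_of c l s0 p0 (other p0)"
  shows "dot a c + dot b l + \<delta> p0 s0 \<le> f"
proof -
  let ?z = "separating_completion c l p0 s0"
  have "dot a c + dot b l + dot \<delta> ?z \<le> f"
    using valid8 in_E8_separating_completion[OF assms(3,4)] by blast
  moreover have "\<delta> p0 s0 \<le> dot \<delta> ?z"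
    using dot_ge_component[OF \<delta>_nonneg, of ?z p0 s0]
    by (simp add: separating_completion_def unit4_def order_indicator_def)
  ultimately show ?thesis by linarith
qed

lemma in_EU_branch:
  assumes "in_EU L lb ub \<alpha> c l u"
  obtains p0 s0 where "u = unit4 p0 s0" and "left_of c l s0 p0 (other p0)"
  using assms unfolding in_EU_def unit4_def by fastforce

lemma in_EGB_branch:
  assumes "in_EGB L lb ub \<alpha> c l w1 w2"
  obtains p0 s0 where "left_of c l s0 p0 (other p0)"
    and "dot \<delta> (AGB w1 w2) = \<delta> p0 s0 - \<delta> (other p0) s0"
proof -
  have "w1 \<in> {0, 1}" "w2 \<in> {0, 1}" using assms by (simp_all add: in_EGB_def)
  then consider "w1 = 0" "w2 = 0" | "w1 = 1" "w2 = 0" | "w1 = 1" "w2 = 1" | "w1 = 0" "w2 = 1"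
    by blast
  then show thesis
    using assms that[of Y Bi] that[of X Bi] that[of Y Bj] that[of X Bj]
    by cases (simp_all add: in_EGB_def dot_def)
qed

theorem proposition6p1:
  fixes L :: "axis \<Rightarrow> real" and lb ub :: vec4 and \<alpha> :: "box \<Rightarrow> real"
    and a b \<delta> :: vec4 and f :: real
  assumes L_pos: "\<forall>s. L s > 0"
    and \<alpha>_pos: "\<forall>k. \<alpha> k > 0"
    and \<delta>_nonneg: "\<forall>p s. \<delta> p s \<ge> 0"
    and valid8: "\<forall>c l z. in_E8 L lb ub \<alpha> c l z \<longrightarrow> dot a c + dot b l + dot \<delta> z \<le> f"
  shows "(\<forall>c l u. in_EU L lb ub \<alpha> c l u \<longrightarrow> dot a c + dot b l + dot \<delta> u \<le> f)
    \<and> (\<forall>c l w1 w2. in_EGB L lb ub \<alpha> c l w1 w2 \<longrightarrow>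
          dot a c + dot b l + dot \<delta> (AGB w1 w2) \<le> f)"
proof (intro conjI allI impI)
  fix c l u
  assume EU: "in_EU L lb ub \<alpha> c l u"
  then obtain p0 s0 where "u = unit4 p0 s0" and "left_of c l s0 p0 (other p0)"
    by (rule in_EU_branch)
  moreover have "in_QFLP L lb ub \<alpha> c l" using EU by (simp add: in_EU_def)
  ultimately show "dot a c + dot b l + dot \<delta> u \<le> f"
    using valid_E8_bounds_branch[OF \<delta>_nonneg valid8] by simp
next
  fix c l w1 w2
  assume EGB: "in_EGB L lb ub \<alpha> c l w1 w2"
  then obtain p0 s0 where branch: "left_of c l s0 p0 (other p0)"
    and gray: "dot \<delta> (AGB w1 w2) = \<delta> p0 s0 - \<delta> (other p0) s0"
    by (rule in_EGB_branch)
  have "in_QFLP L lb ub \<alpha> c l" using EGB by (simp add: in_EGB_def)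
  from this branch have "dot a c + dot b l + \<delta> p0 s0 \<le> f"
    by (rule valid_E8_bounds_branch[OF \<delta>_nonneg valid8])
  with gray \<delta>_nonneg[rule_format, of "other p0" s0]
  show "dot a c + dot b l + dot \<delta> (AGB w1 w2) \<le> f"
    by linarith
qed

end
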